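(* Fix $\gamma>0$. For every compactly supported Borel probability measure $\nu$ on $\mathbb R$, \[\operatorname*{arg\,min}_{\mu}H_\gamma(\nu,\mu)=\{\nu\},\] where $\mu$ ranges over compactly supported Borel probability measures on $\mathbb R$.
   Context: $G_\mu(z)=\int\frac{\mu(dt)}{z-t}$. $P_\gamma(x)=\frac{\gamma}{\pi(x^2+\gamma^2)}$, $(P_\gamma*\nu)(x)=\int P_\gamma(x-t)\nu(dt)$. For a compactly supported Borel probability measure $\mu$ and a Borel probability measure $\nu$ with finite second moment, the Cauchy cross-entropy is $H_\gamma(\nu,\mu)=\int\ell_\gamma(x,\mu)(P_\gamma*\nu)(x)\,dx$, where $\ell_\gamma(x,\mu)=-\log[-\frac1\pi\operatorname{Im}G_\mu(x+i\gamma)]$ (equivalently $H_\gamma(\nu,\mu)=-\int(P_\gamma*\nu)\log(P_\gamma*\mu)\,dx$). $\operatorname{arg\,min}$ denotes the set of minimizers. *)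

theory Defs
  imports "HOL-Probability.Probability"
begin

definition cs_prob :: "real measure set" where
  "cs_prob = {\<mu>. sets \<mu> = sets borel \<and> prob_space \<mu> \<and>
                 (\<exists>K. compact K \<and> emeasure \<mu> K = 1)}"

definition cauchy_transform :: "real measure \<Rightarrow> complex \<Rightarrow> complex" where
  "cauchy_transform \<mu> z = (\<integral>t. 1 / (z - complex_of_real t) \<partial>\<mu>)"

definition poisson_kernel :: "real \<Rightarrow> real \<Rightarrow> real" where
  "poisson_kernel \<gamma> x = \<gamma> / (pi * (x\<^sup>2 + \<gamma>\<^sup>2))"

definition poisson_conv :: "real \<Rightarrow> real measure \<Rightarrow> real \<Rightarrow> real" where
  "poisson_conv \<gamma> \<nu> x = (\<integral>t. poisson_kernel \<gamma> (x - t) \<partial>\<nu>)"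

definition cauchy_loss :: "real \<Rightarrow> real \<Rightarrow> real measure \<Rightarrow> real" where
  "cauchy_loss \<gamma> x \<mu> = - ln (- (1 / pi) * Im (cauchy_transform \<mu> (Complex x \<gamma>)))"

definition cauchy_cross_entropy :: "real \<Rightarrow> real measure \<Rightarrow> real measure \<Rightarrow> real" where
  "cauchy_cross_entropy \<gamma> \<nu> \<mu> =
     (\<integral>x. cauchy_loss \<gamma> x \<mu> * poisson_conv \<gamma> \<nu> x \<partial>lborel)"

end

theory Submission
  imports Defs "HOL-Probability.Sinc_Integral" "HOL-Real_Asymp.Real_Asymp"
begin

(* Since -(1/pi) Im G_mu(x + i gamma) = (P_gamma * mu)(x), the loss is -log q with q = P_gamma * mu.
   Both p = P_gamma * nu and q are probability densities, so
     H_gamma(nu, mu) - H_gamma(nu, nu) = integral of p log(p/q) - p + q,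
   whose integrand is nonnegative and vanishes only where p = q; compact support makes p and q
   comparable to (1 + |x|)^-2, which keeps every integral finite. Hence nu is a minimiser, and a
   minimiser mu has P_gamma * mu = P_gamma * nu almost everywhere. Taking Fourier transforms,
   char mu and char nu agree after multiplication by the Fourier transform of P_gamma, which has
   positive real part because P_gamma is a mixture of centred Gaussians. Levy's uniqueness
   theorem then gives mu = nu. *)

section \<open>The Poisson kernel\<close>

lemma inverse_square_shift_le:
  fixes x t R :: real
  assumes "\<bar>t\<bar> \<le> R"
  shows "1 / (1 + \<bar>x - t\<bar>)\<^sup>2 \<le> (1 + R)\<^sup>2 / (1 + \<bar>x\<bar>)\<^sup>2"
proof -
  have "0 \<le> R * \<bar>x - t\<bar>" using assms by simp
  moreover have "(1 + R) * (1 + \<bar>x - t\<bar>) = 1 + \<bar>x - t\<bar> + R + R * \<bar>x - t\<bar>"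
    by (simp add: algebra_simps)
  ultimately have "1 + \<bar>x\<bar> \<le> (1 + R) * (1 + \<bar>x - t\<bar>)"
    using assms abs_triangle_ineq2[of x t] by linarith
  then have "(1 + \<bar>x\<bar>)\<^sup>2 \<le> (1 + R)\<^sup>2 * (1 + \<bar>x - t\<bar>)\<^sup>2"
    by (simp add: power_mono flip: power_mult_distrib)
  then show ?thesis by (simp add: field_simps)
qed

lemma poisson_kernel_pos: "\<gamma> > 0 \<Longrightarrow> 0 < poisson_kernel \<gamma> y"
  unfolding poisson_kernel_def by (simp add: add_nonneg_pos)

lemma poisson_kernel_le:
  assumes "\<gamma> > 0"
  shows "poisson_kernel \<gamma> y \<le> 1 / (pi * \<gamma>)"
proof -
  have "\<gamma> / (pi * (y\<^sup>2 + \<gamma>\<^sup>2)) \<le> \<gamma> / (pi * \<gamma>\<^sup>2)"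
    using assms by (intro divide_left_mono mult_left_mono) (auto simp: add_nonneg_pos)
  also have "\<dots> = 1 / (pi * \<gamma>)" using assms by (simp add: power2_eq_square)
  finally show ?thesis unfolding poisson_kernel_def .
qed

lemma borel_measurable_poisson_kernel[measurable]: "poisson_kernel \<gamma> \<in> borel_measurable borel"
  unfolding poisson_kernel_def by measurable

lemma poisson_kernel_decay_bounds:
  assumes "\<gamma> > 0"
  shows "\<gamma> / (pi * (1 + \<gamma>\<^sup>2)) / (1 + \<bar>y\<bar>)\<^sup>2 \<le> poisson_kernel \<gamma> y"
    and "poisson_kernel \<gamma> y \<le> 2 * (1 + \<gamma>\<^sup>2) / (pi * \<gamma>) / (1 + \<bar>y\<bar>)\<^sup>2"
proof -
  have den: "0 < y\<^sup>2 + \<gamma>\<^sup>2" using assms by (simp add: add_nonneg_pos)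
  have "y\<^sup>2 \<le> (1 + \<bar>y\<bar>)\<^sup>2" "1 \<le> (1 + \<bar>y\<bar>)\<^sup>2"
    by (simp_all add: power2_eq_square algebra_simps)
  then have "y\<^sup>2 + \<gamma>\<^sup>2 \<le> (1 + \<gamma>\<^sup>2) * (1 + \<bar>y\<bar>)\<^sup>2"
    using mult_left_mono[of 1 "(1 + \<bar>y\<bar>)\<^sup>2" "\<gamma>\<^sup>2"] by (simp add: algebra_simps)
  then show "\<gamma> / (pi * (1 + \<gamma>\<^sup>2)) / (1 + \<bar>y\<bar>)\<^sup>2 \<le> poisson_kernel \<gamma> y"
    unfolding poisson_kernel_def using assms den by (simp add: divide_simps mult_left_mono)
  have "(1 + \<bar>y\<bar>)\<^sup>2 \<le> 2 * (1 + y\<^sup>2)"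
    using sum_squares_ge_zero[of "1 - \<bar>y\<bar>" 0] by (simp add: power2_eq_square algebra_simps)
  moreover have "\<gamma>\<^sup>2 * (2 * (1 + y\<^sup>2)) \<le> 2 * (1 + \<gamma>\<^sup>2) * (y\<^sup>2 + \<gamma>\<^sup>2)"
    by (simp add: algebra_simps)
  ultimately have "\<gamma>\<^sup>2 * (1 + \<bar>y\<bar>)\<^sup>2 \<le> 2 * (1 + \<gamma>\<^sup>2) * (y\<^sup>2 + \<gamma>\<^sup>2)"
    by (meson mult_left_mono order_trans zero_le_power2)
  moreover have "\<gamma> / (pi * D) \<le> C / (pi * \<gamma>) / W"
    if "0 < D" "0 < W" "\<gamma>\<^sup>2 * W \<le> C * D" for C D W :: real
    using that assms by (simp add: field_simps power2_eq_square)
  ultimately show "poisson_kernel \<gamma> y \<le> 2 * (1 + \<gamma>\<^sup>2) / (pi * \<gamma>) / (1 + \<bar>y\<bar>)\<^sup>2"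
    unfolding poisson_kernel_def using den by simp
qed

lemma poisson_kernel_shift_decay_bounds:
  assumes "\<gamma> > 0" "\<bar>t\<bar> \<le> R"
  shows "\<gamma> / (pi * (1 + \<gamma>\<^sup>2)) / (1 + R)\<^sup>2 / (1 + \<bar>x\<bar>)\<^sup>2 \<le> poisson_kernel \<gamma> (x - t)"
    and "poisson_kernel \<gamma> (x - t) \<le> 2 * (1 + \<gamma>\<^sup>2) / (pi * \<gamma>) * (1 + R)\<^sup>2 / (1 + \<bar>x\<bar>)\<^sup>2"
proof -
  have "1 / (1 + R)\<^sup>2 / (1 + \<bar>x\<bar>)\<^sup>2 \<le> 1 / (1 + \<bar>x - t\<bar>)\<^sup>2"
    using inverse_square_shift_le[of "- t" R "x - t"] assms(2) by (simp add: field_simps)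
  from mult_left_mono[OF this, of "\<gamma> / (pi * (1 + \<gamma>\<^sup>2))"]
  show "\<gamma> / (pi * (1 + \<gamma>\<^sup>2)) / (1 + R)\<^sup>2 / (1 + \<bar>x\<bar>)\<^sup>2 \<le> poisson_kernel \<gamma> (x - t)"
    using poisson_kernel_decay_bounds(1)[OF assms(1), of "x - t"] assms(1) by simp
  have "poisson_kernel \<gamma> (x - t) \<le> 2 * (1 + \<gamma>\<^sup>2) / (pi * \<gamma>) * (1 / (1 + \<bar>x - t\<bar>)\<^sup>2)"
    using poisson_kernel_decay_bounds(2)[OF assms(1)] by simp
  also have "\<dots> \<le> 2 * (1 + \<gamma>\<^sup>2) / (pi * \<gamma>) * ((1 + R)\<^sup>2 / (1 + \<bar>x\<bar>)\<^sup>2)"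
    using assms by (intro mult_left_mono inverse_square_shift_le) auto
  finally show "poisson_kernel \<gamma> (x - t) \<le> 2 * (1 + \<gamma>\<^sup>2) / (pi * \<gamma>) * (1 + R)\<^sup>2 / (1 + \<bar>x\<bar>)\<^sup>2"
    by simp
qed

lemma poisson_kernel_scale:
  assumes "\<gamma> > 0"
  shows "poisson_kernel \<gamma> (\<gamma> * u) = inverse (1 + u\<^sup>2) / (pi * \<gamma>)"
proof -
  have "pi * ((\<gamma> * u)\<^sup>2 + \<gamma>\<^sup>2) = \<gamma> * (pi * \<gamma> * (1 + u\<^sup>2))"
    by (simp add: algebra_simps power2_eq_square)
  then have "poisson_kernel \<gamma> (\<gamma> * u) = 1 / (pi * \<gamma> * (1 + u\<^sup>2))"
    unfolding poisson_kernel_def using assms by simp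
  then show ?thesis by (simp add: field_simps)
qed

lemma integrable_poisson_kernel:
  assumes "\<gamma> > 0"
  shows "integrable lborel (poisson_kernel \<gamma>)"
proof -
  have "integrable lborel (\<lambda>u. inverse (1 + u\<^sup>2) / (pi * \<gamma>))"
    using integrable_inverse_1_plus_square by (simp add: set_integrable_def)
  then have "integrable lborel (\<lambda>u. poisson_kernel \<gamma> (0 + \<gamma> * u))"
    using poisson_kernel_scale[OF assms] by simp
  then show ?thesis
    using lborel_integrable_real_affine_iff[of \<gamma> "poisson_kernel \<gamma>" 0] assms by simp
qed

lemma integral_poisson_kernel:
  assumes "\<gamma> > 0"
  shows "(\<integral>y. poisson_kernel \<gamma> y \<partial>lborel) = 1"
proof -
  have "(\<integral>y. poisson_kernel \<gamma> y \<partial>lborel) = \<gamma> * (\<integral>u. poisson_kernel \<gamma> (0 + \<gamma> * u) \<partial>lborel)"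
    using assms lborel_integral_real_affine[of \<gamma> "poisson_kernel \<gamma>" 0] by simp
  also have "\<dots> = \<gamma> * ((\<integral>u. inverse (1 + u\<^sup>2) \<partial>lborel) / (pi * \<gamma>))"
    using poisson_kernel_scale[OF assms] by simp
  also have "\<dots> = 1"
    using assms LBINT_inverse_1_plus_square
    by (simp add: interval_lebesgue_integral_def set_lebesgue_integral_def)
  finally show ?thesis .
qed

lemma nn_integral_poisson_kernel_shift:
  assumes "\<gamma> > 0"
  shows "(\<integral>\<^sup>+x. ennreal (poisson_kernel \<gamma> (x - t)) \<partial>lborel) = 1"
proof -
  have "(\<integral>\<^sup>+x. ennreal (poisson_kernel \<gamma> (x - t)) \<partial>lborel)
      = (\<integral>\<^sup>+x. ennreal (poisson_kernel \<gamma> x) \<partial>lborel)"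
    using nn_integral_real_affine[of "\<lambda>x. ennreal (poisson_kernel \<gamma> (x - t))" 1 t] by simp
  also have "\<dots> = 1"
    using nn_integral_eq_integral[OF integrable_poisson_kernel[OF assms]]
      integral_poisson_kernel[OF assms] poisson_kernel_pos[OF assms] by (simp add: less_imp_le)
  finally show ?thesis .
qed

lemma Im_inverse_Complex_minus:
  "Im (1 / (Complex x \<gamma> - complex_of_real t)) = - pi * poisson_kernel \<gamma> (x - t)"
proof -
  have "Complex x \<gamma> - complex_of_real t = Complex (x - t) \<gamma>"
    by (simp add: complex_eq_iff)
  then show ?thesis by (simp add: Im_divide power2_eq_square poisson_kernel_def)
qed

section \<open>The Fourier transform of the Poisson kernel has no zeros\<close>

lemma has_bochner_integral_exp_neg_mult:
  fixes a :: real
  assumes "0 < a"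
  shows "has_bochner_integral lborel (\<lambda>s. indicator {0..} s * exp (- s * a)) (1 / a)"
proof (rule has_bochner_integral_nn_integral)
  have "(\<integral>\<^sup>+s. ennreal (indicator {0..} s * exp (- s * a)) \<partial>lborel)
      = (\<integral>\<^sup>+s. ennreal (exp (- s * a)) * indicator {0..} s \<partial>lborel)"
    by (intro nn_integral_cong) (auto split: split_indicator)
  also have "\<dots> = 0 - (- exp (- 0 * a) / a)"
  proof (rule nn_integral_FTC_atLeast)
    show "DERIV (\<lambda>s. - exp (- s * a) / a) x :> exp (- x * a)" for x
      using assms by (auto intro!: derivative_eq_intros)
    show "((\<lambda>s. - exp (- s * a) / a) \<longlongrightarrow> 0) at_top"
      using assms by real_asymp
  qed auto
  finally show "(\<integral>\<^sup>+s. ennreal (indicator {0..} s * exp (- s * a)) \<partial>lborel) = ennreal (1 / a)"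
    by simp
qed (use assms in auto)

lemma integral_std_normal_density_cos:
  "(\<integral>x. std_normal_density x * cos (t * x) \<partial>lborel) = exp (- t\<^sup>2 / 2)"
proof -
  interpret real_distribution std_normal_distribution by (rule real_dist_normal_dist)
  have "integrable std_normal_distribution (\<lambda>x. iexp (t * x))"
    by (rule integrable_iexp) auto
  then have "Re (char std_normal_distribution t) = (\<integral>x. Re (iexp (t * x)) \<partial>std_normal_distribution)"
    unfolding char_def by simp
  also have "\<dots> = (\<integral>x. cos (t * x) \<partial>std_normal_distribution)"
    by (simp add: Re_exp)
  also have "\<dots> = (\<integral>x. std_normal_density x * cos (t * x) \<partial>lborel)"
    by (subst integral_density) auto
  finally show ?thesis by (simp add: char_std_normal_distribution)
qed

lemma integral_gaussian_cos_pos: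
  fixes s \<xi> :: real
  assumes "s > 0"
  shows "0 < (\<integral>y. exp (- s * y\<^sup>2) * cos (\<xi> * y) \<partial>lborel)"
proof -
  define c where "c = 1 / sqrt (2 * s)"
  have c: "c > 0" "s * c\<^sup>2 = 1 / 2"
    unfolding c_def using assms by (simp_all add: power_divide)
  have "exp (- s * (c * x)\<^sup>2) * cos (\<xi> * (c * x))
      = sqrt (2 * pi) * (std_normal_density x * cos (\<xi> * c * x))" for x
  proof -
    have "- s * (c * x)\<^sup>2 = - x\<^sup>2 / 2" using c(2) by (simp add: power_mult_distrib)
    then show ?thesis by (simp add: std_normal_density_def mult.assoc mult.left_commute)
  qed
  then have "(\<integral>y. exp (- s * y\<^sup>2) * cos (\<xi> * y) \<partial>lborel)
      = c * (sqrt (2 * pi) * (\<integral>x. std_normal_density x * cos (\<xi> * c * x) \<partial>lborel))"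
    using c(1) lborel_integral_real_affine[of c "\<lambda>y. exp (- s * y\<^sup>2) * cos (\<xi> * y)" 0] by simp
  then show ?thesis
    using c(1) by (simp add: integral_std_normal_density_cos)
qed

lemma integral_pos_of_pos_on_interval:
  fixes f :: "real \<Rightarrow> real"
  assumes "integrable lborel f" "AE x in lborel. 0 \<le> f x"
    and "a < b" "\<And>x. a < x \<Longrightarrow> x < b \<Longrightarrow> 0 < f x"
  shows "0 < (\<integral>x. f x \<partial>lborel)"
proof -
  have "(\<integral>x. f x \<partial>lborel) \<noteq> 0"
  proof
    assume "(\<integral>x. f x \<partial>lborel) = 0"
    then have "AE x in lborel. f x = 0"
      using integral_nonneg_eq_0_iff_AE[OF assms(1,2)] by simp
    then have "AE x in lborel. x \<notin> {a<..<b}"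
      by eventually_elim (use assms(4) in force)
    then have "emeasure lborel {a<..<b} = 0"
      by (subst AE_iff_measurable[symmetric, where P="\<lambda>x. x \<notin> {a<..<b}"]) auto
    then show False using assms(3) by simp
  qed
  moreover have "0 \<le> (\<integral>x. f x \<partial>lborel)" by (rule integral_nonneg_AE[OF assms(2)])
  ultimately show ?thesis by simp
qed

lemma integrable_gaussian_mixture_cos:
  fixes \<gamma> \<xi> :: real
  assumes "\<gamma> > 0"
  shows "integrable (lborel \<Otimes>\<^sub>M lborel)
           (\<lambda>(y, s). indicator {0..} s * exp (- s * (y\<^sup>2 + \<gamma>\<^sup>2)) * cos (\<xi> * y))"
proof -
  define k where "k y s = indicator {0..} s * exp (- s * (y\<^sup>2 + \<gamma>\<^sup>2)) * cos (\<xi> * y)" for y s :: real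
  have den: "0 < y\<^sup>2 + \<gamma>\<^sup>2" for y using assms by (simp add: add_nonneg_pos)
  note exp_integral = has_bochner_integral_exp_neg_mult[OF den]
  have inner: "integrable lborel (k y)" for y
    unfolding k_def using integrable.intros[OF exp_integral[of y]] by simp
  have bound: "(\<integral>s. norm (k y s) \<partial>lborel) \<le> pi / \<gamma> * poisson_kernel \<gamma> y" for y
  proof -
    have "(\<integral>s. norm (k y s) \<partial>lborel) = \<bar>cos (\<xi> * y)\<bar> / (y\<^sup>2 + \<gamma>\<^sup>2)"
      unfolding k_def using has_bochner_integral_integral_eq[OF exp_integral[of y]]
      by (simp add: abs_mult)
    also have "\<dots> \<le> pi / \<gamma> * poisson_kernel \<gamma> y"
      unfolding poisson_kernel_def using assms den[of y] by (simp add: divide_right_mono)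
    finally show ?thesis .
  qed
  have integrable_norm: "integrable lborel (\<lambda>y. \<integral>s. norm (k y s) \<partial>lborel)"
  proof (rule Bochner_Integration.integrable_bound)
    show "integrable lborel (\<lambda>y. pi / \<gamma> * poisson_kernel \<gamma> y)"
      using integrable_poisson_kernel[OF assms] by simp
    show "AE y in lborel. norm (\<integral>s. norm (k y s) \<partial>lborel) \<le> norm (pi / \<gamma> * poisson_kernel \<gamma> y)"
      using bound assms poisson_kernel_pos[OF assms] by (intro AE_I2) (simp add: abs_of_pos)
  qed (unfold k_def, measurable)
  have "integrable (lborel \<Otimes>\<^sub>M lborel) (case_prod k)"
  proof (rule lborel_pair.Fubini_integrable)
    show "case_prod k \<in> borel_measurable (lborel \<Otimes>\<^sub>M lborel)" unfolding k_def by measurable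
    show "integrable lborel (\<lambda>y. \<integral>s. norm (case_prod k (y, s)) \<partial>lborel)"
      using integrable_norm by simp
    show "AE y in lborel. integrable lborel (\<lambda>s. case_prod k (y, s))" using inner by simp
  qed
  then show ?thesis unfolding k_def .
qed

text \<open>Subordination: \<open>1 / (y\<^sup>2 + \<gamma>\<^sup>2)\<close> is the integral of \<open>exp (- s * (y\<^sup>2 + \<gamma>\<^sup>2))\<close>
  over \<open>s \<ge> 0\<close>, so the cosine transform of the Poisson kernel is a positive mixture of
  cosine transforms of Gaussians, each of which is positive.\<close>

lemma integral_cos_poisson_kernel_pos:
  fixes \<gamma> \<xi> :: real
  assumes "\<gamma> > 0"
  shows "0 < (\<integral>y. cos (\<xi> * y) * poisson_kernel \<gamma> y \<partial>lborel)"
proof -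
  define k where "k y s = indicator {0..} s * exp (- s * (y\<^sup>2 + \<gamma>\<^sup>2)) * cos (\<xi> * y)" for y s :: real
  define \<Phi> where "\<Phi> s = (\<integral>y. k y s \<partial>lborel)" for s
  have k_integrable: "integrable (lborel \<Otimes>\<^sub>M lborel) (case_prod k)"
    unfolding k_def by (rule integrable_gaussian_mixture_cos[OF assms])
  have "cos (\<xi> * y) * poisson_kernel \<gamma> y = \<gamma> / pi * (\<integral>s. k y s \<partial>lborel)" for y
  proof -
    have "0 < y\<^sup>2 + \<gamma>\<^sup>2" using assms by (simp add: add_nonneg_pos)
    from has_bochner_integral_integral_eq[OF has_bochner_integral_exp_neg_mult[OF this]] this
    show ?thesis unfolding k_def poisson_kernel_def by simp
  qed
  then have "(\<integral>y. cos (\<xi> * y) * poisson_kernel \<gamma> y \<partial>lborel) = \<gamma> / pi * (\<integral>s. \<Phi> s \<partial>lborel)"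
    unfolding \<Phi>_def using lborel_pair.Fubini_integral[OF k_integrable] by simp
  moreover have "0 < (\<integral>s. \<Phi> s \<partial>lborel)"
  proof (rule integral_pos_of_pos_on_interval[of _ 0 1])
    have \<Phi>_eq: "\<Phi> s = indicator {0..} s * exp (- s * \<gamma>\<^sup>2)
        * (\<integral>y. exp (- s * y\<^sup>2) * cos (\<xi> * y) \<partial>lborel)" for s
      unfolding \<Phi>_def k_def
      by (simp add: algebra_simps exp_add[symmetric] flip: integral_mult_right_zero)
    then show "0 < \<Phi> s" if "0 < s" "s < 1" for s
      using that integral_gaussian_cos_pos by simp
    show "AE s in lborel. 0 \<le> \<Phi> s"
      using AE_lborel_singleton[of 0] by eventually_elim
        (use \<Phi>_eq integral_gaussian_cos_pos in \<open>auto intro: less_imp_le simp: indicator_def\<close>)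
    show "integrable lborel \<Phi>"
      unfolding \<Phi>_def by (rule lborel_pair.integrable_snd[OF k_integrable])
  qed simp
  ultimately show ?thesis using assms by simp
qed

definition poisson_kernel_char :: "real \<Rightarrow> real \<Rightarrow> complex" where
  "poisson_kernel_char \<gamma> \<xi> = (\<integral>y. iexp (\<xi> * y) * complex_of_real (poisson_kernel \<gamma> y) \<partial>lborel)"

lemma poisson_kernel_char_nonzero:
  assumes "\<gamma> > 0"
  shows "poisson_kernel_char \<gamma> \<xi> \<noteq> 0"
proof -
  have "integrable lborel (\<lambda>y. complex_of_real (poisson_kernel \<gamma> y))"
    using integrable_poisson_kernel[OF assms] by simp
  then have "integrable lborel (\<lambda>y. iexp (\<xi> * y) * complex_of_real (poisson_kernel \<gamma> y))"
    by (rule Bochner_Integration.integrable_bound) (auto simp: norm_mult)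
  then have "Re (poisson_kernel_char \<gamma> \<xi>)
      = (\<integral>y. Re (iexp (\<xi> * y) * complex_of_real (poisson_kernel \<gamma> y)) \<partial>lborel)"
    unfolding poisson_kernel_char_def by (rule integral_Re[symmetric])
  also have "\<dots> = (\<integral>y. cos (\<xi> * y) * poisson_kernel \<gamma> y \<partial>lborel)"
    by (simp add: Re_exp)
  finally show ?thesis using integral_cos_poisson_kernel_pos[OF assms, of \<xi>] by auto
qed

section \<open>Poisson smoothing of probability measures\<close>

locale poisson_smoothing = real_distribution \<mu> for \<mu> +
  fixes \<gamma> :: real
  assumes gamma_pos: "\<gamma> > 0"
begin

lemma integrable_poisson_kernel_shift: "integrable \<mu> (\<lambda>t. poisson_kernel \<gamma> (x - t))"
proof (rule integrable_const_bound[where B="1 / (pi * \<gamma>)"])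
  show "AE t in \<mu>. norm (poisson_kernel \<gamma> (x - t)) \<le> 1 / (pi * \<gamma>)"
    using poisson_kernel_le[OF gamma_pos] poisson_kernel_pos[OF gamma_pos] by (simp add: less_imp_le)
qed measurable

lemma poisson_conv_pos: "0 < poisson_conv \<gamma> \<mu> x"
  unfolding poisson_conv_def
  using integral_less_AE_space[of "\<lambda>_. 0" "\<lambda>t. poisson_kernel \<gamma> (x - t)"]
    integrable_poisson_kernel_shift poisson_kernel_pos[OF gamma_pos] emeasure_space_1 by simp

lemma borel_measurable_poisson_conv[measurable]: "poisson_conv \<gamma> \<mu> \<in> borel_measurable borel"
  unfolding poisson_conv_def by measurable

lemma cauchy_loss_eq: "cauchy_loss \<gamma> x \<mu> = - ln (poisson_conv \<gamma> \<mu> x)"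
proof -
  have "integrable \<mu> (\<lambda>t. 1 / (Complex x \<gamma> - complex_of_real t))"
  proof (rule integrable_const_bound[where B="1 / \<gamma>"])
    show "AE t in \<mu>. norm (1 / (Complex x \<gamma> - complex_of_real t)) \<le> 1 / \<gamma>"
    proof (intro AE_I2)
      fix t
      have "\<gamma> \<le> norm (Complex x \<gamma> - complex_of_real t)"
        using abs_Im_le_cmod[of "Complex x \<gamma> - complex_of_real t"] gamma_pos by simp
      then show "norm (1 / (Complex x \<gamma> - complex_of_real t)) \<le> 1 / \<gamma>"
        using gamma_pos by (simp add: norm_divide divide_simps)
    qed
  qed measurable
  then have "Im (cauchy_transform \<mu> (Complex x \<gamma>))
      = (\<integral>t. Im (1 / (Complex x \<gamma> - complex_of_real t)) \<partial>\<mu>)"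
    unfolding cauchy_transform_def by simp
  also have "\<dots> = - pi * poisson_conv \<gamma> \<mu> x"
    unfolding Im_inverse_Complex_minus poisson_conv_def by simp
  finally show ?thesis unfolding cauchy_loss_def by simp
qed

lemma cauchy_cross_entropy_eq:
  "cauchy_cross_entropy \<gamma> \<nu> \<mu> = - (\<integral>x. ln (poisson_conv \<gamma> \<mu> x) * poisson_conv \<gamma> \<nu> x \<partial>lborel)"
  unfolding cauchy_cross_entropy_def cauchy_loss_eq by simp

lemma nn_integral_poisson_conv: "(\<integral>\<^sup>+x. ennreal (poisson_conv \<gamma> \<mu> x) \<partial>lborel) = 1"
proof -
  interpret pair_sigma_finite lborel \<mu> by unfold_locales
  have "(\<integral>\<^sup>+x. ennreal (poisson_conv \<gamma> \<mu> x) \<partial>lborel)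
      = (\<integral>\<^sup>+x. (\<integral>\<^sup>+t. ennreal (poisson_kernel \<gamma> (x - t)) \<partial>\<mu>) \<partial>lborel)"
    unfolding poisson_conv_def
    using nn_integral_eq_integral[OF integrable_poisson_kernel_shift] poisson_kernel_pos[OF gamma_pos]
    by (simp add: less_imp_le)
  also have "\<dots> = (\<integral>\<^sup>+t. (\<integral>\<^sup>+x. ennreal (poisson_kernel \<gamma> (x - t)) \<partial>lborel) \<partial>\<mu>)"
    by (rule Fubini'[symmetric]) measurable
  also have "\<dots> = 1"
    using emeasure_space_1 by (simp add: nn_integral_poisson_kernel_shift[OF gamma_pos])
  finally show ?thesis .
qed

lemma has_bochner_integral_poisson_conv: "has_bochner_integral lborel (poisson_conv \<gamma> \<mu>) 1"
  using nn_integral_poisson_conv poisson_conv_pos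
  by (intro has_bochner_integral_nn_integral) (auto intro: less_imp_le)

lemma integrable_poisson_conv: "integrable lborel (poisson_conv \<gamma> \<mu>)"
  and integral_poisson_conv: "(\<integral>x. poisson_conv \<gamma> \<mu> x \<partial>lborel) = 1"
  using has_bochner_integral_poisson_conv by (simp_all add: has_bochner_integral_iff)

lemma char_poisson_conv:
  "(\<integral>x. iexp (\<xi> * x) * complex_of_real (poisson_conv \<gamma> \<mu> x) \<partial>lborel)
     = char \<mu> \<xi> * poisson_kernel_char \<gamma> \<xi>"
proof -
  interpret pair_sigma_finite lborel \<mu> by unfold_locales
  define f where "f x t = iexp (\<xi> * x) * complex_of_real (poisson_kernel \<gamma> (x - t))" for x t
  have "integrable (lborel \<Otimes>\<^sub>M \<mu>) (case_prod f)"
  proof (rule Fubini_integrable)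
    have "(\<lambda>x. \<integral>t. norm (f x t) \<partial>\<mu>) = poisson_conv \<gamma> \<mu>"
      unfolding f_def poisson_conv_def using poisson_kernel_pos[OF gamma_pos]
      by (intro ext Bochner_Integration.integral_cong refl) (simp add: norm_mult less_imp_le)
    then show "integrable lborel (\<lambda>x. \<integral>t. norm (case_prod f (x, t)) \<partial>\<mu>)"
      using integrable_poisson_conv by simp
    show "AE x in lborel. integrable \<mu> (\<lambda>t. case_prod f (x, t))"
      unfolding f_def using integrable_poisson_kernel_shift by (intro AE_I2) auto
  qed (unfold f_def, measurable)
  then have "(\<integral>x. (\<integral>t. f x t \<partial>\<mu>) \<partial>lborel) = (\<integral>t. (\<integral>x. f x t \<partial>lborel) \<partial>\<mu>)"
    by (rule Fubini_integral[symmetric])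
  moreover have "(\<integral>x. f x t \<partial>lborel) = iexp (\<xi> * t) * poisson_kernel_char \<gamma> \<xi>" for t
  proof -
    have "(\<integral>x. f x t \<partial>lborel) = (\<integral>x. f (t + x) t \<partial>lborel)"
      using lborel_integral_real_affine[of 1 "\<lambda>x. f x t" t] by simp
    also have "\<dots> = (\<integral>x. iexp (\<xi> * t) * (iexp (\<xi> * x) * poisson_kernel \<gamma> x) \<partial>lborel)"
      unfolding f_def by (simp add: distrib_left exp_add mult.assoc)
    finally show ?thesis unfolding poisson_kernel_char_def by simp
  qed
  ultimately show ?thesis
    unfolding f_def poisson_conv_def char_def by simp
qed

end

lemma poisson_conv_inject:
  assumes "poisson_smoothing \<mu> \<gamma>" "poisson_smoothing \<nu> \<gamma>"
    and "AE x in lborel. poisson_conv \<gamma> \<mu> x = poisson_conv \<gamma> \<nu> x"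
  shows "\<mu> = \<nu>"
proof -
  interpret M: poisson_smoothing \<mu> \<gamma> by fact
  interpret N: poisson_smoothing \<nu> \<gamma> by fact
  have "char \<mu> \<xi> * poisson_kernel_char \<gamma> \<xi> = char \<nu> \<xi> * poisson_kernel_char \<gamma> \<xi>" for \<xi>
    unfolding M.char_poisson_conv[symmetric] N.char_poisson_conv[symmetric]
    using assms(3) by (intro integral_cong_AE) auto
  then have "char \<mu> = char \<nu>" using poisson_kernel_char_nonzero[OF M.gamma_pos] by auto
  then show ?thesis
    by (rule Levy_uniqueness[OF M.real_distribution_axioms N.real_distribution_axioms])
qed

section \<open>The cross-entropy of compactly supported measures\<close>

lemma nn_integral_log_weight_atLeast_0:
  fixes a b :: real
  assumes "0 \<le> a" "0 \<le> b"
  shows "(\<integral>\<^sup>+u. ennreal ((a + b * ln (1 + u)) / (1 + u)\<^sup>2) * indicator {0..} u \<partial>lborel)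
           = ennreal (a + b)"
proof -
  define F where "F u = - (a + b + b * ln (1 + u)) / (1 + u)" for u :: real
  have "(\<integral>\<^sup>+u. ennreal ((a + b * ln (1 + u)) / (1 + u)\<^sup>2) * indicator {0..} u \<partial>lborel) = 0 - F 0"
  proof (rule nn_integral_FTC_atLeast)
    show "DERIV F x :> (a + b * ln (1 + x)) / (1 + x)\<^sup>2" if "0 \<le> x" for x
    proof -
      have "1 + x > 0" using that by simp
      then show ?thesis unfolding F_def
        by (auto intro!: derivative_eq_intros simp: divide_simps)
           (simp add: algebra_simps power2_eq_square)
    qed
    show "0 \<le> (a + b * ln (1 + x)) / (1 + x)\<^sup>2" if "0 \<le> x" for x
      using assms that by simp
    show "(F \<longlongrightarrow> 0) at_top" unfolding F_def by real_asymp
  qed measurable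
  then show ?thesis by (simp add: F_def add.commute)
qed

lemma integrable_log_weight:
  fixes a b :: real
  assumes "0 \<le> a" "0 \<le> b"
  shows "integrable lborel (\<lambda>x. (a + b * ln (1 + \<bar>x\<bar>)) / (1 + \<bar>x\<bar>)\<^sup>2)"
proof (rule integrableI_bounded)
  define g where "g u = ennreal ((a + b * ln (1 + u)) / (1 + u)\<^sup>2) * indicator {0..} u"
    for u :: real
  have "(\<integral>\<^sup>+x. ennreal (norm ((a + b * ln (1 + \<bar>x\<bar>)) / (1 + \<bar>x\<bar>)\<^sup>2)) \<partial>lborel)
      \<le> (\<integral>\<^sup>+x. g x + g (- x) \<partial>lborel)"
    unfolding g_def using assms by (intro nn_integral_mono) (auto split: split_indicator)
  also have "\<dots> = (\<integral>\<^sup>+x. g x \<partial>lborel) + (\<integral>\<^sup>+x. g (- x) \<partial>lborel)"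
    unfolding g_def by (intro nn_integral_add) auto
  also have "(\<integral>\<^sup>+x. g (- x) \<partial>lborel) = (\<integral>\<^sup>+x. g x \<partial>lborel)"
    using nn_integral_real_affine[of g "-1" 0] unfolding g_def by simp
  finally show "(\<integral>\<^sup>+x. ennreal (norm ((a + b * ln (1 + \<bar>x\<bar>)) / (1 + \<bar>x\<bar>)\<^sup>2)) \<partial>lborel) < \<infinity>"
    using nn_integral_log_weight_atLeast_0[OF assms] unfolding g_def
    by (auto simp flip: ennreal_plus intro: le_less_trans)
qed measurable

lemma abs_ln_le_of_bounds:
  fixes a b w y :: real
  assumes "0 < a" "1 \<le> w" "a / w \<le> y" "y \<le> b / w"
  shows "\<bar>ln y\<bar> \<le> \<bar>ln a\<bar> + \<bar>ln b\<bar> + ln w"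
proof -
  have "0 < a / w" using assms by simp
  moreover have "0 < y" "0 < b / w" using \<open>0 < a / w\<close> assms by linarith+
  ultimately have "ln (a / w) \<le> ln y" "ln y \<le> ln (b / w)"
    using assms(3,4) by simp_all
  moreover have pos: "0 < y" "0 < b" using \<open>0 < b / w\<close> \<open>0 < y\<close> assms(2)
    by (simp_all add: zero_less_divide_iff)
  moreover have "ln (a / w) = ln a - ln w" "ln (b / w) = ln b - ln w"
    using pos assms by (simp_all add: ln_div)
  moreover have "0 \<le> ln w" using assms by simp
  ultimately show ?thesis by linarith
qed

definition kl_integrand :: "real \<Rightarrow> real \<Rightarrow> real" where
  "kl_integrand p q = p * (ln p - ln q) - p + q"

lemma kl_integrand_nonneg:
  assumes "0 < p" "0 < q"
  shows "0 \<le> kl_integrand p q"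
proof -
  have "p * ln (q / p) \<le> p * (q / p - 1)"
    using assms by (intro mult_left_mono ln_le_minus_one) auto
  then show ?thesis
    using assms unfolding kl_integrand_def by (simp add: ln_div algebra_simps)
qed

lemma kl_integrand_eq_0_iff:
  assumes "0 < p" "0 < q"
  shows "kl_integrand p q = 0 \<longleftrightarrow> p = q"
proof
  assume "kl_integrand p q = 0"
  then have "ln (q / p) = q / p - 1"
    using assms unfolding kl_integrand_def by (simp add: ln_div field_simps)
  then have "q / p = 1" using assms by (intro ln_eq_minus_one) auto
  then show "p = q" using assms by simp
qed (simp add: kl_integrand_def)

locale bounded_poisson_smoothing = poisson_smoothing +
  fixes R :: real
  assumes AE_bounded: "AE t in \<mu>. \<bar>t\<bar> \<le> R"
begin

lemma poisson_conv_decay_bounds: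
  obtains a b where "0 < a"
    and "\<And>x. a / (1 + \<bar>x\<bar>)\<^sup>2 \<le> poisson_conv \<gamma> \<mu> x"
    and "\<And>x. poisson_conv \<gamma> \<mu> x \<le> b / (1 + \<bar>x\<bar>)\<^sup>2"
proof
  define a where "a = \<gamma> / (pi * (1 + \<gamma>\<^sup>2)) / (1 + R)\<^sup>2"
  define b where "b = 2 * (1 + \<gamma>\<^sup>2) / (pi * \<gamma>) * (1 + R)\<^sup>2"
  have "AE t in \<mu>. 0 \<le> R" using AE_bounded by eventually_elim linarith
  then have "0 \<le> R" by simp
  then show "0 < a"
    unfolding a_def using gamma_pos
    by (intro divide_pos_pos mult_pos_pos) (auto simp: add_pos_nonneg)
  fix x
  have kernel_bounds: "AE t in \<mu>. a / (1 + \<bar>x\<bar>)\<^sup>2 \<le> poisson_kernel \<gamma> (x - t)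
      \<and> poisson_kernel \<gamma> (x - t) \<le> b / (1 + \<bar>x\<bar>)\<^sup>2"
    using AE_bounded unfolding a_def b_def
    by eventually_elim (intro conjI poisson_kernel_shift_decay_bounds[OF gamma_pos])
  have "(\<integral>t. a / (1 + \<bar>x\<bar>)\<^sup>2 \<partial>\<mu>) \<le> poisson_conv \<gamma> \<mu> x"
    unfolding poisson_conv_def using kernel_bounds
    by (intro integral_mono_AE integrable_poisson_kernel_shift) auto
  then show "a / (1 + \<bar>x\<bar>)\<^sup>2 \<le> poisson_conv \<gamma> \<mu> x" using prob_space by simp
  have "poisson_conv \<gamma> \<mu> x \<le> (\<integral>t. b / (1 + \<bar>x\<bar>)\<^sup>2 \<partial>\<mu>)"
    unfolding poisson_conv_def using kernel_bounds
    by (intro integral_mono_AE integrable_poisson_kernel_shift) auto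
  then show "poisson_conv \<gamma> \<mu> x \<le> b / (1 + \<bar>x\<bar>)\<^sup>2" using prob_space by simp
qed

lemma integrable_ln_poisson_conv_mult:
  assumes "bounded_poisson_smoothing \<nu> \<gamma> S"
  shows "integrable lborel (\<lambda>x. ln (poisson_conv \<gamma> \<mu> x) * poisson_conv \<gamma> \<nu> x)"
proof -
  interpret N: bounded_poisson_smoothing \<nu> \<gamma> S by fact
  obtain a b where a: "0 < a" and lower: "\<And>x. a / (1 + \<bar>x\<bar>)\<^sup>2 \<le> poisson_conv \<gamma> \<mu> x"
    and upper: "\<And>x. poisson_conv \<gamma> \<mu> x \<le> b / (1 + \<bar>x\<bar>)\<^sup>2"
    using poisson_conv_decay_bounds by blast
  obtain c where c: "\<And>x. poisson_conv \<gamma> \<nu> x \<le> c / (1 + \<bar>x\<bar>)\<^sup>2"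
    using N.poisson_conv_decay_bounds by blast
  define B where "B = \<bar>ln a\<bar> + \<bar>ln b\<bar>"
  have "0 \<le> c" using c[of 0] N.poisson_conv_pos[of 0] by simp
  have B: "0 \<le> B" unfolding B_def by simp
  have bound: "norm (ln (poisson_conv \<gamma> \<mu> x) * poisson_conv \<gamma> \<nu> x)
      \<le> (c * B + 2 * c * ln (1 + \<bar>x\<bar>)) / (1 + \<bar>x\<bar>)\<^sup>2" for x
  proof -
    have "\<bar>ln (poisson_conv \<gamma> \<mu> x)\<bar> \<le> B + 2 * ln (1 + \<bar>x\<bar>)"
      using abs_ln_le_of_bounds[OF a _ lower upper] by (simp add: B_def ln_realpow)
    then have "\<bar>ln (poisson_conv \<gamma> \<mu> x)\<bar> * poisson_conv \<gamma> \<nu> x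
        \<le> (B + 2 * ln (1 + \<bar>x\<bar>)) * (c / (1 + \<bar>x\<bar>)\<^sup>2)"
      using c[of x] N.poisson_conv_pos[of x] B by (intro mult_mono) auto
    then show ?thesis
      using N.poisson_conv_pos[of x] by (simp add: abs_mult add_divide_distrib algebra_simps)
  qed
  show ?thesis
  proof (rule Bochner_Integration.integrable_bound)
    show "integrable lborel (\<lambda>x. (c * B + 2 * c * ln (1 + \<bar>x\<bar>)) / (1 + \<bar>x\<bar>)\<^sup>2)"
      using integrable_log_weight \<open>0 \<le> c\<close> B by simp
    show "AE x in lborel. norm (ln (poisson_conv \<gamma> \<mu> x) * poisson_conv \<gamma> \<nu> x)
        \<le> norm ((c * B + 2 * c * ln (1 + \<bar>x\<bar>)) / (1 + \<bar>x\<bar>)\<^sup>2)"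
      using bound by (intro AE_I2) (metis abs_ge_self order_trans real_norm_def)
  qed measurable
qed

end

lemma cauchy_cross_entropy_diff_eq_kl:
  assumes "bounded_poisson_smoothing \<mu> \<gamma> R" "bounded_poisson_smoothing \<nu> \<gamma> S"
  defines "kl \<equiv> \<lambda>x. kl_integrand (poisson_conv \<gamma> \<nu> x) (poisson_conv \<gamma> \<mu> x)"
  shows "integrable lborel kl"
    and "cauchy_cross_entropy \<gamma> \<nu> \<mu> - cauchy_cross_entropy \<gamma> \<nu> \<nu> = (\<integral>x. kl x \<partial>lborel)"
proof -
  interpret M: bounded_poisson_smoothing \<mu> \<gamma> R by fact
  interpret N: bounded_poisson_smoothing \<nu> \<gamma> S by fact
  have kl_eq: "kl = (\<lambda>x. (ln (poisson_conv \<gamma> \<nu> x) * poisson_conv \<gamma> \<nu> x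
      - ln (poisson_conv \<gamma> \<mu> x) * poisson_conv \<gamma> \<nu> x)
      + (poisson_conv \<gamma> \<mu> x - poisson_conv \<gamma> \<nu> x))"
    unfolding kl_def kl_integrand_def by (auto simp: algebra_simps)
  note integrable =
    M.integrable_ln_poisson_conv_mult[OF assms(2)] N.integrable_ln_poisson_conv_mult[OF assms(2)]
    M.integrable_poisson_conv N.integrable_poisson_conv
  show "integrable lborel kl"
    unfolding kl_eq
    by (intro Bochner_Integration.integrable_add Bochner_Integration.integrable_diff integrable)
  show "cauchy_cross_entropy \<gamma> \<nu> \<mu> - cauchy_cross_entropy \<gamma> \<nu> \<nu> = (\<integral>x. kl x \<partial>lborel)"
    unfolding kl_eq M.cauchy_cross_entropy_eq N.cauchy_cross_entropy_eq
    using integrable M.integral_poisson_conv N.integral_poisson_conv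
    by (simp add: Bochner_Integration.integral_add Bochner_Integration.integral_diff)
qed

lemma cauchy_cross_entropy_self_le:
  assumes "bounded_poisson_smoothing \<mu> \<gamma> R" "bounded_poisson_smoothing \<nu> \<gamma> S"
  shows "cauchy_cross_entropy \<gamma> \<nu> \<nu> \<le> cauchy_cross_entropy \<gamma> \<nu> \<mu>"
proof -
  interpret M: bounded_poisson_smoothing \<mu> \<gamma> R by fact
  interpret N: bounded_poisson_smoothing \<nu> \<gamma> S by fact
  have "0 \<le> (\<integral>x. kl_integrand (poisson_conv \<gamma> \<nu> x) (poisson_conv \<gamma> \<mu> x) \<partial>lborel)"
    using kl_integrand_nonneg[OF N.poisson_conv_pos M.poisson_conv_pos] by simp
  then show ?thesis using cauchy_cross_entropy_diff_eq_kl(2)[OF assms] by simp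
qed

lemma cauchy_cross_entropy_le_self_imp_eq:
  assumes "bounded_poisson_smoothing \<mu> \<gamma> R" "bounded_poisson_smoothing \<nu> \<gamma> S"
    and "cauchy_cross_entropy \<gamma> \<nu> \<mu> \<le> cauchy_cross_entropy \<gamma> \<nu> \<nu>"
  shows "\<mu> = \<nu>"
proof -
  interpret M: bounded_poisson_smoothing \<mu> \<gamma> R by fact
  interpret N: bounded_poisson_smoothing \<nu> \<gamma> S by fact
  note kl_nonneg = kl_integrand_nonneg[OF N.poisson_conv_pos M.poisson_conv_pos]
  have "(\<integral>x. kl_integrand (poisson_conv \<gamma> \<nu> x) (poisson_conv \<gamma> \<mu> x) \<partial>lborel) = 0"
    using cauchy_cross_entropy_diff_eq_kl(2)[OF assms(1,2)] assms(3)
      cauchy_cross_entropy_self_le[OF assms(1,2)] by simp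
  then have "AE x in lborel. kl_integrand (poisson_conv \<gamma> \<nu> x) (poisson_conv \<gamma> \<mu> x) = 0"
    using integral_nonneg_eq_0_iff_AE[OF cauchy_cross_entropy_diff_eq_kl(1)[OF assms(1,2)]]
      kl_nonneg by simp
  then have "AE x in lborel. poisson_conv \<gamma> \<mu> x = poisson_conv \<gamma> \<nu> x"
    by eventually_elim (simp add: kl_integrand_eq_0_iff[OF N.poisson_conv_pos M.poisson_conv_pos])
  then show ?thesis
    by (rule poisson_conv_inject[OF M.poisson_smoothing_axioms N.poisson_smoothing_axioms])
qed

lemma cs_prob_real_distribution: "\<mu> \<in> cs_prob \<Longrightarrow> real_distribution \<mu>"
  unfolding cs_prob_def real_distribution_def real_distribution_axioms_def by auto

lemma cs_prob_AE_bounded: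
  assumes "\<mu> \<in> cs_prob"
  obtains R where "AE t in \<mu>. \<bar>t\<bar> \<le> R"
proof -
  from assms obtain K where sets: "sets \<mu> = sets borel" and "prob_space \<mu>"
    and K: "compact K" "emeasure \<mu> K = 1" unfolding cs_prob_def by auto
  interpret prob_space \<mu> by fact
  obtain R where R: "\<And>x. x \<in> K \<Longrightarrow> norm x \<le> R"
    using compact_imp_bounded[OF K(1)] bounded_pos by blast
  have "K \<in> sets \<mu>" using sets K(1) by (simp add: compact_imp_closed)
  then have "AE t in \<mu>. t \<in> K"
    using K(2) AE_in_set_eq_1 by (simp add: emeasure_eq_measure)
  then have "AE t in \<mu>. \<bar>t\<bar> \<le> R" by eventually_elim (use R in auto)
  then show thesis by (rule that)
qed

lemma cs_prob_bounded_poisson_smoothing: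
  assumes "\<gamma> > 0" "\<mu> \<in> cs_prob"
  obtains R where "bounded_poisson_smoothing \<mu> \<gamma> R"
proof -
  obtain R where "AE t in \<mu>. \<bar>t\<bar> \<le> R" using cs_prob_AE_bounded[OF assms(2)] .
  with assms show thesis
    by (intro that[of R])
       (simp add: bounded_poisson_smoothing_def bounded_poisson_smoothing_axioms_def
          poisson_smoothing_def poisson_smoothing_axioms_def cs_prob_real_distribution)
qed

theorem mainTheorem4:
  fixes \<gamma> :: real and \<nu> :: "real measure"
  assumes "\<gamma> > 0" and "\<nu> \<in> cs_prob"
  shows "{\<mu> \<in> cs_prob. \<forall>\<mu>' \<in> cs_prob.
            cauchy_cross_entropy \<gamma> \<nu> \<mu> \<le> cauchy_cross_entropy \<gamma> \<nu> \<mu>'} = {\<nu>}"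
proof -
  obtain S where \<nu>: "bounded_poisson_smoothing \<nu> \<gamma> S"
    using cs_prob_bounded_poisson_smoothing[OF assms] .
  have minimal: "cauchy_cross_entropy \<gamma> \<nu> \<nu> \<le> cauchy_cross_entropy \<gamma> \<nu> \<mu>"
    if \<mu>: "\<mu> \<in> cs_prob" for \<mu>
  proof -
    obtain R where "bounded_poisson_smoothing \<mu> \<gamma> R"
      using cs_prob_bounded_poisson_smoothing[OF assms(1) \<mu>] .
    then show ?thesis using \<nu> by (rule cauchy_cross_entropy_self_le)
  qed
  have unique: "\<mu> = \<nu>"
    if \<mu>: "\<mu> \<in> cs_prob"
      and le: "cauchy_cross_entropy \<gamma> \<nu> \<mu> \<le> cauchy_cross_entropy \<gamma> \<nu> \<nu>" for \<mu>
  proof -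
    obtain R where "bounded_poisson_smoothing \<mu> \<gamma> R"
      using cs_prob_bounded_poisson_smoothing[OF assms(1) \<mu>] .
    then show ?thesis using \<nu> le by (rule cauchy_cross_entropy_le_self_imp_eq)
  qed
  show ?thesis using assms(2) minimal unique by blast
qed

end
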